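(* Let $\bm{A}\in\mathbb{R}^{M\times M}$ be diagonal with $\sigma_{\max}(\bm{A})<1$ (largest singular value), $\bm{W}\in\mathbb{R}^{M\times M}$, $\bm{h}_0\in\mathbb{R}^M$, $\alpha_1,\dots,\alpha_B\in\mathbb{R}$, $\bm{h}_1,\dots,\bm{h}_B\in\mathbb{R}^M$. Consider the "clipped" dendPLRNN $$\bm{z}_t=\bm{A}\bm{z}_{t-1}+\bm{W}\sum_{b=1}^B\alpha_b\big[\max(0,\bm{z}_{t-1}-\bm{h}_b)-\max(0,\bm{z}_{t-1})\big]+\bm{h}_0,$$ obtained from the dendPLRNN by adding, for each basis $(\alpha_b,\bm{h}_b)$, a basis $(-\alpha_b,\bm{0})$. Then for every initial condition $\bm{z}_1\in\mathbb{R}^M$ the orbit $(\bm{z}_t)_{t\ge1}$ is bounded.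
   Context: $\max$ is taken componentwise. *)

theory Defs
  imports "HOL-Analysis.Analysis"
begin

definition relu_vec :: "real ^ 'm \<Rightarrow> real ^ 'm" where
  "relu_vec x = (\<chi> i. max 0 (x $ i))"

text \<open>Largest singular value of a square matrix = operator 2-norm of x -> A x.\<close>
definition sigma_max :: "real ^ 'm ^ 'm \<Rightarrow> real" where
  "sigma_max A = onorm (\<lambda>x. A *v x)"

definition is_diagonal :: "real ^ 'm ^ 'm \<Rightarrow> bool" where
  "is_diagonal A \<longleftrightarrow> (\<forall>i j. i \<noteq> j \<longrightarrow> A $ i $ j = 0)"

definition clipped_step ::
  "real ^ 'm ^ 'm \<Rightarrow> real ^ 'm ^ 'm \<Rightarrow> real ^ 'm \<Rightarrow> nat \<Rightarrow> (nat \<Rightarrow> real)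
     \<Rightarrow> (nat \<Rightarrow> real ^ 'm) \<Rightarrow> real ^ 'm \<Rightarrow> real ^ 'm" where
  "clipped_step A W h0 B alpha h z =
     A *v z + W *v (\<Sum>b = 1..B. alpha b *\<^sub>R (relu_vec (z - h b) - relu_vec z)) + h0"

end

theory Submission
  imports Defs
begin

text \<open>The clipping makes the nonlinearity bounded: componentwise,
  \<open>max(0, z - h) - max(0, z)\<close> lies between \<open>-|h|\<close> and \<open>|h|\<close>. Hence one step
  satisfies \<open>\<parallel>z\<^sub>t\<^sub>+\<^sub>1\<parallel> \<le> \<sigma> \<parallel>z\<^sub>t\<parallel> + K\<close> with \<open>\<sigma> = \<sigma>\<^sub>m\<^sub>a\<^sub>x(A) < 1\<close> and a constant \<open>K\<close>
  depending only on \<open>W\<close>, \<open>h\<^sub>0\<close> and the bases, and by induction every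
  \<open>\<parallel>z\<^sub>t\<parallel>\<close> stays below \<open>max \<parallel>z\<^sub>1\<parallel> (K / (1 - \<sigma>))\<close>.\<close>

lemma norm_relu_vec_diff_le: "norm (relu_vec (x - c) - relu_vec x) \<le> norm (c :: real ^ 'm)"
proof (rule norm_le_componentwise_cart)
  fix i
  show "norm ((relu_vec (x - c) - relu_vec x) $ i) \<le> norm (c $ i)"
    by (simp add: relu_vec_def max_def)
qed

lemma norm_matrix_vector_mult_le_sigma_max: "norm (A *v x) \<le> sigma_max A * norm x"
  unfolding sigma_max_def by (rule onorm[OF matrix_vector_mul_bounded_linear])

lemma sigma_max_nonneg: "0 \<le> sigma_max A"
  unfolding sigma_max_def by (rule onorm_pos_le[OF matrix_vector_mul_bounded_linear])

lemma norm_clipped_step_le: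
  "norm (clipped_step A W h0 B alpha h x)
     \<le> sigma_max A * norm x + (sigma_max W * (\<Sum>b = 1..B. \<bar>alpha b\<bar> * norm (h b)) + norm h0)"
proof -
  let ?v = "\<Sum>b = 1..B. alpha b *\<^sub>R (relu_vec (x - h b) - relu_vec x)"
  have "norm ?v \<le> (\<Sum>b = 1..B. norm (alpha b *\<^sub>R (relu_vec (x - h b) - relu_vec x)))"
    by (rule norm_sum)
  also have "\<dots> \<le> (\<Sum>b = 1..B. \<bar>alpha b\<bar> * norm (h b))"
    by (rule sum_mono) (simp add: mult_left_mono norm_relu_vec_diff_le)
  finally have "norm (W *v ?v) \<le> sigma_max W * (\<Sum>b = 1..B. \<bar>alpha b\<bar> * norm (h b))"
    by (meson norm_matrix_vector_mult_le_sigma_max sigma_max_nonneg mult_left_mono order_trans)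
  moreover have "norm (clipped_step A W h0 B alpha h x) \<le> norm (A *v x) + norm (W *v ?v) + norm h0"
    unfolding clipped_step_def by (meson norm_triangle_le norm_triangle_ineq add_mono order_refl)
  ultimately show ?thesis
    using norm_matrix_vector_mult_le_sigma_max[of A x] by linarith
qed

lemma bounded_if_norm_le_affine_contraction:
  fixes z :: "nat \<Rightarrow> 'a :: real_normed_vector"
  assumes "0 \<le> s" and "s < 1"
    and step: "\<And>n. n \<ge> m \<Longrightarrow> norm (z (Suc n)) \<le> s * norm (z n) + K"
  shows "bounded (z ` {m..})"
proof -
  define R where "R = max (norm (z m)) (K / (1 - s))"
  have "K = (1 - s) * (K / (1 - s))"
    using \<open>s < 1\<close> by simp
  also have "\<dots> \<le> (1 - s) * R"
    unfolding R_def by (rule mult_left_mono) (use \<open>s < 1\<close> in auto)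
  finally have K_le: "K \<le> (1 - s) * R" .
  have "norm (z n) \<le> R" if "m \<le> n" for n
    using that
  proof (induction n rule: dec_induct)
    case base
    then show ?case
      unfolding R_def by simp
  next
    case (step n)
    have "norm (z (Suc n)) \<le> s * norm (z n) + K"
      using step.hyps by (intro assms(3)) simp
    also have "\<dots> \<le> s * R + K"
      using step.IH \<open>0 \<le> s\<close> by (simp add: mult_left_mono)
    also have "\<dots> \<le> R"
      using K_le by (simp add: algebra_simps)
    finally show ?case .
  qed
  then show ?thesis
    unfolding bounded_iff by blast
qed

theorem theorem2:
  fixes A W :: "real ^ 'm ^ 'm" and h0 :: "real ^ 'm" and B :: nat
    and alpha :: "nat \<Rightarrow> real" and h :: "nat \<Rightarrow> real ^ 'm"
    and z :: "nat \<Rightarrow> real ^ 'm"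
  assumes "is_diagonal A"
    and "sigma_max A < 1"
    and "\<And>t. t \<ge> 2 \<Longrightarrow> z t = clipped_step A W h0 B alpha h (z (t - 1))"
  shows "bounded (z ` {1..})"
proof (rule bounded_if_norm_le_affine_contraction[OF sigma_max_nonneg \<open>sigma_max A < 1\<close>])
  fix n :: nat
  assume "1 \<le> n"
  then have "z (Suc n) = clipped_step A W h0 B alpha h (z n)"
    using assms(3)[of "Suc n"] by simp
  then show "norm (z (Suc n))
      \<le> sigma_max A * norm (z n) + (sigma_max W * (\<Sum>b = 1..B. \<bar>alpha b\<bar> * norm (h b)) + norm h0)"
    by (simp only: norm_clipped_step_le)
qed

end
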